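(* Let $n\ge2$, $0<\alpha\le1$, and let $M\colon[0,\infty)\times[0,\infty)\to[0,\infty)$ be symmetric and $\alpha$--homogeneous with $M(1,1)=1$, such that $\rho_M(x,y)=\dfrac{|x-y|}{M(|x|,|y|)}$ is a metric on $\mathbb{R}^n$. If $\alpha<1$, then $\rho_M$ is $\dfrac{2^\alpha}{1-\alpha}$--quasiconvex. If moreover $\alpha<1$ and $M(x,y)\le A_p(x,y)^\alpha$ for all $x,y\ge0$, for some $p\in(0,\infty]$, then $\rho_M$ is $c_{p,\alpha}$--quasiconvex, where $$c_{p,\alpha}=\frac{\max\{2^{\alpha(1-1/p)},1\}}{1-\alpha}\quad(1/\infty=0).$$
   Context: $M$ is $\alpha$--homogeneous if $M(tx,ty)=t^\alpha M(x,y)$. Power mean: $A_p(x,y)=\left(\frac{x^p+y^p}{2}\right)^{1/p}$ for $0<p<\infty$, and $A_\infty(x,y)=\max\{x,y\}$. Convention $0/0=0$. For a path $\gamma\colon[0,l]\to\mathbb{R}^n$, $\ell_M(\gamma)=\lim\sum_i\rho_M(\gamma(t_i),\gamma(t_{i+1}))$ over partitions with mesh tending to $0$. $\rho_M$ is $c$--quasiconvex if $\inf_\gamma\ell_M(\gamma)\le c\,\rho_M(x,y)$ for all $x,y$, infimum over rectifiable paths joining $x,y$. *)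

theory Defs
  imports "HOL-Analysis.Analysis"
begin

text \<open>The quasi-metric rho_M(x,y) = |x-y| / M(|x|,|y|); Isabelle's division gives 0/0 = 0.\<close>
definition rhoM :: "(real \<Rightarrow> real \<Rightarrow> real) \<Rightarrow> 'a::real_normed_vector \<Rightarrow> 'a \<Rightarrow> real" where
  "rhoM M x y = norm (x - y) / M (norm x) (norm y)"

definition is_partition :: "real \<Rightarrow> nat \<Rightarrow> (nat \<Rightarrow> real) \<Rightarrow> bool" where
  "is_partition l k t \<longleftrightarrow> t 0 = 0 \<and> t k = l \<and> (\<forall>i<k. t i < t (Suc i))"

definition mesh :: "nat \<Rightarrow> (nat \<Rightarrow> real) \<Rightarrow> real" where
  "mesh k t = Max (insert 0 ((\<lambda>i. t (Suc i) - t i) ` {..<k}))"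

definition partition_sum :: "('a \<Rightarrow> 'a \<Rightarrow> real) \<Rightarrow> ('b \<Rightarrow> 'a) \<Rightarrow> nat \<Rightarrow> (nat \<Rightarrow> 'b) \<Rightarrow> real" where
  "partition_sum d \<gamma> k t = (\<Sum>i<k. d (\<gamma> (t i)) (\<gamma> (t (Suc i))))"

definition rectifiable_on :: "real \<Rightarrow> (real \<Rightarrow> 'a::real_normed_vector) \<Rightarrow> bool" where
  "rectifiable_on l \<gamma> \<longleftrightarrow> 0 \<le> l \<and> continuous_on {0..l} \<gamma> \<and>
     (\<exists>B. \<forall>k t. is_partition l k t \<longrightarrow> partition_sum dist \<gamma> k t \<le> B)"

definition has_M_length ::
  "(real \<Rightarrow> real \<Rightarrow> real) \<Rightarrow> real \<Rightarrow> (real \<Rightarrow> 'a::real_normed_vector) \<Rightarrow> real \<Rightarrow> bool" where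
  "has_M_length M l \<gamma> L \<longleftrightarrow>
     (\<forall>\<epsilon>>0. \<exists>\<delta>>0. \<forall>k t. is_partition l k t \<and> mesh k t < \<delta> \<longrightarrow>
        \<bar>partition_sum (rhoM M) \<gamma> k t - L\<bar> < \<epsilon>)"

text \<open>c-quasiconvexity: inf over rectifiable paths joining x,y of ell_M \<le> c rho_M(x,y).
  Paths whose ell_M does not exist as a finite real contribute +infinity (or nothing) to the inf.\<close>
definition quasiconvex :: "(real \<Rightarrow> real \<Rightarrow> real) \<Rightarrow> real \<Rightarrow> 'a::real_normed_vector itself \<Rightarrow> bool" where
  "quasiconvex M c (_::'a itself) \<longleftrightarrow>
     (\<forall>x y::'a. Inf (ereal ` {L. \<exists>l \<gamma>. rectifiable_on l \<gamma> \<and> \<gamma> 0 = x \<and> \<gamma> l = y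
                                        \<and> has_M_length M l \<gamma> L})
               \<le> ereal (c * rhoM M x y))"

definition power_mean :: "ereal \<Rightarrow> real \<Rightarrow> real \<Rightarrow> real" where
  "power_mean p x y = (if p = \<infinity> then max x y
     else ((x powr real_of_ereal p + y powr real_of_ereal p) / 2) powr (1 / real_of_ereal p))"

definition inv_p :: "ereal \<Rightarrow> real" where
  "inv_p p = (if p = \<infinity> then 0 else 1 / real_of_ereal p)"

definition c_const :: "ereal \<Rightarrow> real \<Rightarrow> real" where
  "c_const p \<alpha> = max (2 powr (\<alpha> * (1 - inv_p p))) 1 / (1 - \<alpha>)"

end

theory Submission
  imports Defs
begin

(* Along a segment, rho_M is infinitesimally |dz| / |z|^alpha, because M is continuous at the
   diagonal with M(t, t) = t^alpha. This continuity, the global bound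
   M(a, b) >= M(0, 1) max(a, b)^alpha / 2 and the bound M(a, b) <= max(a, b)^alpha all come from the
   triangle inequality for rho_M; the first one uses a second dimension. Since
   |z| >= | |x| - (|x| + |y|) t | at the point z of the segment [x, y] with parameter t, the
   rho_M-length of the segment is at most
   |x - y| (|x|^(1-alpha) + |y|^(1-alpha)) / ((|x| + |y|) (1 - alpha)),
   which is at most |x - y| / ((1 - alpha) ((|x| + |y|) / 2)^alpha) by concavity of t^(1-alpha).
   Hence rho_M is c-quasiconvex as soon as M(a, b) <= c (1 - alpha) ((a + b) / 2)^alpha. The power
   mean inequalities give this for c = c_{p,alpha} when M <= A_p^alpha, and for
   c = 2^alpha / (1 - alpha) because M <= max^alpha = A_infinity^alpha. *)

section \<open>Inequalities for real powers\<close>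

lemma powr_le_tangent_line:
  fixes u v q :: real
  assumes "0 < u" "0 \<le> v" "0 < q" "q \<le> 1"
  shows "v powr q \<le> u powr q + q * u powr (q - 1) * (v - u)"
proof (cases "v = 0")
  case True
  have "u powr q = u * u powr (q - 1)" using assms by (simp add: powr_diff)
  moreover have "q * u \<le> u" using assms by (simp add: mult_left_le_one_le)
  ultimately show ?thesis using True assms by (simp add: algebra_simps)
next
  case False
  then have "v > 0" using assms by simp
  have "(v/u) powr q * 1 powr (1 - q) \<le> q * (v/u) + (1 - q) * 1"
    using Youngs_inequality_0[of q "1 - q" "v/u" 1] assms \<open>v > 0\<close> by simp
  then have young: "(v/u) powr q \<le> 1 + q * (v/u - 1)" by (simp add: algebra_simps)
  have "v powr q = u powr q * (v/u) powr q" using assms \<open>v > 0\<close> by (simp add: powr_divide)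
  also have "\<dots> \<le> u powr q * (1 + q * (v/u - 1))"
    using young by (simp add: mult_left_mono)
  also have "\<dots> = u powr q + q * (u powr q / u) * (v - u)"
    using assms by (simp add: field_simps)
  also have "u powr q / u = u powr (q - 1)" using assms by (simp add: powr_diff)
  finally show ?thesis .
qed

lemma powr_midpoint_ge_mean:
  fixes a b q :: real
  assumes "0 \<le> a" "0 \<le> b" "0 < q" "q \<le> 1"
  shows "(a powr q + b powr q) / 2 \<le> ((a + b) / 2) powr q"
proof (cases "a + b = 0")
  case True
  then have "a = 0" "b = 0" using assms by auto
  then show ?thesis by simp
next
  case False
  define m where "m = (a + b) / 2"
  have "m > 0" using False assms by (simp add: m_def)
  have "a powr q + b powr q \<le>
      (m powr q + q * m powr (q - 1) * (a - m)) + (m powr q + q * m powr (q - 1) * (b - m))"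
    using powr_le_tangent_line[of m _ q] \<open>m > 0\<close> assms by (intro add_mono) auto
  also have "\<dots> = 2 * m powr q" by (simp add: m_def algebra_simps)
  finally show ?thesis by (simp add: m_def)
qed

lemma powr_add_le_add_powr:
  fixes a b p :: real
  assumes "0 \<le> a" "0 \<le> b" "1 \<le> p"
  shows "a powr p + b powr p \<le> (a + b) powr p"
proof (cases "a + b = 0")
  case True
  then have "a = 0" "b = 0" using assms by auto
  then show ?thesis by simp
next
  case False
  define s where "s = a + b"
  have "s > 0" using False assms by (simp add: s_def)
  have "(a/s) powr p + (b/s) powr p \<le> (a/s) powr 1 + (b/s) powr 1"
    using assms \<open>s > 0\<close> by (intro add_mono powr_mono') (auto simp: s_def)
  also have "\<dots> = 1" using \<open>s > 0\<close> assms by (simp add: s_def add_divide_distrib[symmetric])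
  finally have "(a powr p + b powr p) / s powr p \<le> 1"
    using assms \<open>s > 0\<close> by (simp add: powr_divide add_divide_distrib)
  then show ?thesis using \<open>s > 0\<close> by (simp add: s_def)
qed

lemma power_mean_le_midpoint:
  assumes "0 < p" "0 \<le> a" "0 \<le> b"
  shows "power_mean p a b \<le> max (2 powr (1 - inv_p p)) 1 * ((a + b) / 2)"
proof (cases p)
  case PInf
  have "max a b \<le> 2 powr 1 * ((a + b) / 2)" using assms by simp
  then show ?thesis using PInf by (simp add: power_mean_def inv_p_def max_mult_distrib_right)
next
  case (real r)
  then have "r > 0" using assms by simp
  have pm: "power_mean p a b = ((a powr r + b powr r) / 2) powr (1 / r)"
    using real by (simp add: power_mean_def)
  show ?thesis
  proof (cases "r \<le> 1")
    case True
    have "power_mean p a b \<le> (((a + b) / 2) powr r) powr (1 / r)"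
      unfolding pm using powr_midpoint_ge_mean[OF assms(2,3) \<open>r > 0\<close> True] \<open>r > 0\<close>
      by (intro powr_mono2) auto
    also have "\<dots> = 1 * ((a + b) / 2)" using \<open>r > 0\<close> assms by (simp add: powr_powr)
    also have "\<dots> \<le> max (2 powr (1 - inv_p p)) 1 * ((a + b) / 2)"
      using assms by (intro mult_right_mono) auto
    finally show ?thesis .
  next
    case False
    have "power_mean p a b \<le> ((a + b) powr r / 2) powr (1 / r)"
      unfolding pm using powr_add_le_add_powr[OF assms(2,3), of r] False \<open>r > 0\<close>
      by (intro powr_mono2) auto
    also have "\<dots> = (a + b) / 2 powr (1 / r)"
      using \<open>r > 0\<close> assms by (simp add: powr_divide powr_powr)
    also have "\<dots> = 2 powr (1 - 1 / r) * ((a + b) / 2)"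
      by (simp add: powr_diff field_simps)
    also have "\<dots> \<le> max (2 powr (1 - inv_p p)) 1 * ((a + b) / 2)"
      using real assms by (intro mult_right_mono) (auto simp: inv_p_def)
    finally show ?thesis .
  qed
qed (use assms in simp)

lemma max_powr_one:
  fixes c \<alpha> :: real
  assumes "0 < c" "0 \<le> \<alpha>"
  shows "max c 1 powr \<alpha> = max (c powr \<alpha>) 1"
proof (cases "c \<le> 1")
  case True
  then have "c powr \<alpha> \<le> 1 powr \<alpha>" using assms by (intro powr_mono2) auto
  then show ?thesis using True by (simp add: max_def)
next
  case False
  then have "1 \<le> c powr \<alpha>" using assms by (simp add: ge_one_powr_ge_zero)
  then show ?thesis using False by (simp add: max_def)
qed

lemma power_mean_powr_le_c_const:
  assumes "0 < p" "0 \<le> a" "0 \<le> b" "0 < \<alpha>" "\<alpha> < 1"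
  shows "power_mean p a b powr \<alpha> \<le> c_const p \<alpha> * (1 - \<alpha>) * ((a + b) / 2) powr \<alpha>"
proof -
  have "0 \<le> power_mean p a b"
    using assms by (cases p) (auto simp: power_mean_def)
  then have "power_mean p a b powr \<alpha> \<le> (max (2 powr (1 - inv_p p)) 1 * ((a + b) / 2)) powr \<alpha>"
    using power_mean_le_midpoint[OF assms(1-3)] assms by (intro powr_mono2) auto
  also have "\<dots> = max (2 powr (1 - inv_p p)) 1 powr \<alpha> * ((a + b) / 2) powr \<alpha>"
    using assms by (intro powr_mult)
  also have "max (2 powr (1 - inv_p p)) 1 powr \<alpha> = c_const p \<alpha> * (1 - \<alpha>)"
    using assms by (simp add: max_powr_one powr_powr mult.commute c_const_def)
  finally show ?thesis .
qed

section \<open>Signed powers and a radial primitive along segments\<close>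

definition spowr :: "real \<Rightarrow> real \<Rightarrow> real" where
  "spowr q u = (if 0 \<le> u then u powr q else - ((- u) powr q))"

lemma spowr_mono: "0 < q \<Longrightarrow> v \<le> u \<Longrightarrow> spowr q v \<le> spowr q u"
  unfolding spowr_def by (auto intro: powr_mono2 order_trans[of _ 0])

lemma abs_spowr: "0 < q \<Longrightarrow> \<bar>spowr q u\<bar> = \<bar>u\<bar> powr q"
  unfolding spowr_def by auto

lemma continuous_on_spowr:
  assumes "0 < q"
  shows "continuous_on A (spowr q)"
proof -
  have "spowr q = (\<lambda>u. if u \<le> 0 then - ((- u) powr q) else u powr q)"
    by (auto simp: spowr_def)
  moreover have "continuous_on UNIV \<dots>"
    using assms
    by (intro continuous_on_cases_le[where a = 0 and f = "\<lambda>u. - ((- u) powr q)"]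
        continuous_intros continuous_on_powr') auto
  ultimately show ?thesis by (metis continuous_on_subset subset_UNIV)
qed

text \<open>The mean value theorem for \<open>spowr q\<close>, whose derivative \<open>q \<bar>u\<bar> powr (q - 1)\<close> is
  smallest at the endpoint of largest modulus.\<close>
lemma spowr_diff_ge:
  fixes u v q :: real
  assumes "v < u" "0 < q" "q \<le> 1"
  shows "(u - v) * max \<bar>u\<bar> \<bar>v\<bar> powr (q - 1) \<le> (spowr q u - spowr q v) / q"
proof -
  consider "0 \<le> v" | "u \<le> 0" | "v < 0" "0 < u" by linarith
  then show ?thesis
  proof cases
    case 1
    have "v powr q \<le> u powr q + q * u powr (q - 1) * (v - u)"
      using powr_le_tangent_line[of u v q] 1 assms by simp
    then show ?thesis using 1 assms by (simp add: spowr_def field_simps max_def)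
  next
    case 2
    have "(-u) powr q \<le> (-v) powr q + q * (-v) powr (q - 1) * ((-u) - (-v))"
      using powr_le_tangent_line[of "-v" "-u" q] 2 assms by simp
    then show ?thesis using 2 assms by (auto simp: spowr_def field_simps max_def)
  next
    case 3
    define m where "m = max u (-v)"
    have "m > 0" "max \<bar>u\<bar> \<bar>v\<bar> = m" using 3 by (auto simp: m_def)
    have le_powr: "w * m powr (q - 1) \<le> w powr q" if "0 < w" "w \<le> m" for w
    proof -
      have "w * m powr (q - 1) \<le> w * w powr (q - 1)"
        using that assms by (intro mult_left_mono powr_mono2') auto
      also have "\<dots> = w powr q" using that by (simp add: powr_diff)
      finally show ?thesis .
    qed
    have "(u - v) * m powr (q - 1) \<le> u powr q + (-v) powr q"
      using le_powr[of u] le_powr[of "-v"] 3 by (simp add: m_def left_diff_distrib)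
    also have "\<dots> \<le> (u powr q + (-v) powr q) / q"
      using assms by (simp add: le_divide_eq mult_left_le)
    finally show ?thesis using 3 \<open>max \<bar>u\<bar> \<bar>v\<bar> = m\<close> by (simp add: spowr_def)
  qed
qed

lemma norm_add_norm_pos: "x \<noteq> y \<Longrightarrow> 0 < norm x + norm y"
  by (cases "x = 0") (auto simp: add_pos_nonneg)

lemma norm_linepath_ge:
  assumes "0 \<le> r" "r \<le> 1"
  shows "\<bar>norm x - (norm x + norm y) * r\<bar> \<le> norm (linepath x y r)"
proof -
  have "norm ((1 - r) *\<^sub>R x) = (1 - r) * norm x" "norm (- (r *\<^sub>R y)) = r * norm y"
    using assms by (simp_all only: norm_scaleR norm_minus_cancel)
  then have "norm x - (norm x + norm y) * r = norm ((1 - r) *\<^sub>R x) - norm (- (r *\<^sub>R y))"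
    by (simp only:) (simp add: algebra_simps)
  also have "\<bar>\<dots>\<bar> \<le> norm ((1 - r) *\<^sub>R x - - (r *\<^sub>R y))"
    by (rule norm_triangle_ineq3)
  finally show ?thesis by (simp add: linepath_def)
qed

lemma norm_linepath_le:
  assumes "0 \<le> r" "r \<le> 1"
  shows "norm (linepath x y r) \<le> norm x + norm y"
proof -
  have "norm (linepath x y r) \<le> (1 - r) * norm x + r * norm y"
    using assms norm_triangle_ineq[of "(1 - r) *\<^sub>R x" "r *\<^sub>R y"] by (simp add: linepath_def)
  also have "\<dots> \<le> norm x + norm y"
    using assms by (intro add_mono mult_left_le_one_le) auto
  finally show ?thesis .
qed

lemma norm_linepath_diff: "norm (linepath x y s - linepath x y t) = \<bar>t - s\<bar> * norm (x - y)"
proof -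
  have "linepath x y s - linepath x y t = (t - s) *\<^sub>R (x - y)"
    by (simp add: linepath_def algebra_simps)
  then show ?thesis by simp
qed

lemma max_norm_le_if_not_near:
  assumes "0 < \<epsilon>" "\<not> norm (z - w) \<le> \<epsilon> * min (norm z) (norm w)"
  shows "max (norm z) (norm w) \<le> norm (z - w) * (1 + 1 / \<epsilon>)"
proof -
  have "\<bar>norm z - norm w\<bar> \<le> norm (z - w)" by (rule norm_triangle_ineq3)
  moreover have "min (norm z) (norm w) < norm (z - w) / \<epsilon>"
    using assms by (simp add: field_simps)
  ultimately show ?thesis
    unfolding max_def min_def abs_le_iff by (simp add: algebra_simps split: if_splits)
qed

lemma max_min_eq_self: "\<bar>v\<bar> \<le> R \<Longrightarrow> max (- R) (min R v) = v" for v R :: real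
  by (auto simp: abs_le_iff max_def min_def)

text \<open>Along \<open>linepath x y\<close> the norm is at least \<open>\<bar>norm x - (norm x + norm y) * t\<bar>\<close>, with
  equality when \<open>y\<close> is a negative multiple of \<open>x\<close>. Minus \<open>radial_primitive \<alpha> R x y\<close> is a
  primitive of \<open>norm (x - y) * \<bar>norm x - (norm x + norm y) * t\<bar> powr (- \<alpha>)\<close> where this lower
  bound is at most \<open>R\<close>, and is constant elsewhere.\<close>
definition radial_primitive :: "real \<Rightarrow> real \<Rightarrow> 'a::real_normed_vector \<Rightarrow> 'a \<Rightarrow> real \<Rightarrow> real" where
  "radial_primitive \<alpha> R x y t =
     norm (x - y) / ((norm x + norm y) * (1 - \<alpha>)) *
     spowr (1 - \<alpha>) (max (- R) (min R (norm x - (norm x + norm y) * t)))"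

lemma radial_primitive_antimono:
  assumes "\<alpha> < 1" "s \<le> t"
  shows "radial_primitive \<alpha> R x y t \<le> radial_primitive \<alpha> R x y s"
  unfolding radial_primitive_def using assms
  by (intro mult_left_mono spowr_mono max.mono min.mono) (auto intro: mult_left_mono)

lemma abs_radial_primitive_le:
  assumes "\<alpha> < 1" "0 \<le> R"
  shows "\<bar>radial_primitive \<alpha> R x y t\<bar>
    \<le> norm (x - y) / ((norm x + norm y) * (1 - \<alpha>)) * R powr (1 - \<alpha>)"
proof -
  have "\<bar>spowr (1 - \<alpha>) (max (- R) (min R (norm x - (norm x + norm y) * t)))\<bar> \<le> R powr (1 - \<alpha>)"
    using assms by (auto simp: abs_spowr intro!: powr_mono2)
  moreover have C: "0 \<le> norm (x - y) / ((norm x + norm y) * (1 - \<alpha>))" using assms by simp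
  ultimately show ?thesis
    unfolding radial_primitive_def abs_mult abs_of_nonneg[OF C] by (rule mult_left_mono)
qed

lemma continuous_on_radial_primitive:
  assumes "\<alpha> < 1"
  shows "continuous_on A (radial_primitive \<alpha> R x y)"
  unfolding radial_primitive_def using assms
  by (intro continuous_intros continuous_on_compose2[OF continuous_on_spowr]) auto

lemma radial_primitive_0_1_le:
  assumes "0 < \<alpha>" "\<alpha> < 1" "x \<noteq> y" "norm x + norm y \<le> R"
  shows "radial_primitive \<alpha> R x y 0 - radial_primitive \<alpha> R x y 1
    \<le> norm (x - y) / ((1 - \<alpha>) * ((norm x + norm y) / 2) powr \<alpha>)"
proof -
  define S where "S = norm x + norm y"
  have "S > 0" using norm_add_norm_pos[OF assms(3)] by (simp add: S_def)
  have "radial_primitive \<alpha> R x y 0 - radial_primitive \<alpha> R x y 1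
      = norm (x - y) / (S * (1 - \<alpha>)) * (norm x powr (1 - \<alpha>) + norm y powr (1 - \<alpha>))"
  proof -
    have "norm x \<le> R" "norm y \<le> R" using assms norm_ge_zero[of x] norm_ge_zero[of y] by linarith+
    then have "max (- R) (min R (norm x)) = norm x" "max (- R) (min R (- norm y)) = - norm y"
      by (simp_all only: max_min_eq_self abs_norm_cancel abs_minus_cancel)
    then show ?thesis
      by (simp add: radial_primitive_def spowr_def S_def add_divide_distrib distrib_left)
  qed
  also have "\<dots> \<le> norm (x - y) / (S * (1 - \<alpha>)) * (2 * (S / 2) powr (1 - \<alpha>))"
    using powr_midpoint_ge_mean[of "norm x" "norm y" "1 - \<alpha>"] assms \<open>S > 0\<close>
    by (intro mult_left_mono) (auto simp: S_def)
  also have "\<dots> = norm (x - y) / ((1 - \<alpha>) * (S / 2) powr \<alpha>)"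
  proof -
    have "(S / 2) powr (1 - \<alpha>) = S / 2 / (S / 2) powr \<alpha>"
      using \<open>S > 0\<close> by (simp add: powr_diff)
    then show ?thesis using \<open>S > 0\<close> by simp
  qed
  finally show ?thesis by (simp add: S_def)
qed

lemma linepath_step_le_radial_primitive:
  fixes x y :: "'a::real_normed_vector"
  assumes "0 < \<alpha>" "\<alpha> < 1" "x \<noteq> y" "0 \<le> s" "s < t" "t \<le> 1"
    and R: "max (norm (linepath x y s)) (norm (linepath x y t)) \<le> R"
  shows "norm (linepath x y s - linepath x y t) *
      max (norm (linepath x y s)) (norm (linepath x y t)) powr (- \<alpha>)
    \<le> radial_primitive \<alpha> R x y s - radial_primitive \<alpha> R x y t"
proof -
  define S where "S = norm x + norm y"
  define u where "u r = norm x - S * r" for r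
  define mx where "mx = max (norm (linepath x y s)) (norm (linepath x y t))"
  define mu where "mu = max \<bar>u s\<bar> \<bar>u t\<bar>"
  have "S > 0" using norm_add_norm_pos[OF assms(3)] by (simp add: S_def)
  have u_le: "\<bar>u s\<bar> \<le> norm (linepath x y s)" "\<bar>u t\<bar> \<le> norm (linepath x y t)"
    using norm_linepath_ge[of s x y] norm_linepath_ge[of t x y] assms by (auto simp: u_def S_def)
  have "u s - u t = S * (t - s)" by (simp add: u_def algebra_simps)
  moreover have "0 < S * (t - s)" using \<open>S > 0\<close> assms by simp
  ultimately have "u t < u s" by linarith
  then have "0 < mu" "mu \<le> mx" using u_le by (auto simp: mu_def mx_def)
  have "mx powr (- \<alpha>) \<le> mu powr (- \<alpha>)"
    using \<open>0 < mu\<close> \<open>mu \<le> mx\<close> assms by (intro powr_mono2') auto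
  then have "norm (linepath x y s - linepath x y t) * mx powr (- \<alpha>)
      \<le> norm (x - y) * (t - s) * mu powr (- \<alpha>)"
    using assms by (simp add: norm_linepath_diff mult_left_mono)
  also have "\<dots> = norm (x - y) / S * ((u s - u t) * mu powr ((1 - \<alpha>) - 1))"
    using \<open>u s - u t = S * (t - s)\<close> \<open>S > 0\<close> by simp
  also have "\<dots> \<le> norm (x - y) / S * ((spowr (1 - \<alpha>) (u s) - spowr (1 - \<alpha>) (u t)) / (1 - \<alpha>))"
    using spowr_diff_ge[OF \<open>u t < u s\<close>, of "1 - \<alpha>"] assms \<open>S > 0\<close>
    by (intro mult_left_mono) (auto simp: mu_def)
  also have "\<dots> = radial_primitive \<alpha> R x y s - radial_primitive \<alpha> R x y t"
  proof -
    have "max (- R) (min R (u s)) = u s" "max (- R) (min R (u t)) = u t"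
      using u_le R by (auto intro!: max_min_eq_self)
    then show ?thesis
      unfolding radial_primitive_def S_def[symmetric] u_def[symmetric]
      by (simp add: diff_divide_distrib right_diff_distrib)
  qed
  finally show ?thesis by (simp add: mx_def)
qed

section \<open>Partition sums\<close>

lemma is_partition_mono:
  assumes "is_partition l k t" "i \<le> j" "j \<le> k"
  shows "t i \<le> t j"
  using assms(2,3)
proof (induction j)
  case (Suc j)
  show ?case
  proof (cases "i \<le> j")
    case True
    then have "t i \<le> t j" using Suc by simp
    also have "t j < t (Suc j)" using assms(1) Suc unfolding is_partition_def by auto
    finally show ?thesis by simp
  next
    case False
    then have "i = Suc j" using Suc by simp
    then show ?thesis by simp
  qed
qed simp

lemma is_partition_bounds:
  assumes "is_partition l k t" "i \<le> k"
  shows "0 \<le> t i" "t i \<le> l"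
  using is_partition_mono[OF assms(1), of 0 i] is_partition_mono[OF assms(1), of i k] assms
  unfolding is_partition_def by auto

lemma step_le_mesh: "i < k \<Longrightarrow> t (Suc i) - t i \<le> mesh k t"
  unfolding mesh_def by (intro Max_ge) auto

lemma mesh_nonneg: "0 \<le> mesh k t"
  unfolding mesh_def by (intro Max_ge) auto

lemma exists_partition_mesh_less:
  assumes "0 < l" "0 < \<delta>"
  shows "\<exists>k t. is_partition l k t \<and> mesh k t < \<delta>"
proof -
  obtain N :: nat where N: "l / \<delta> < N" using reals_Archimedean2 by blast
  then have "0 < real N" using divide_pos_pos[OF assms] by linarith
  define t where "t i = l * real i / real N" for i
  have "is_partition l N t"
    unfolding is_partition_def t_def using \<open>0 < real N\<close> assms
    by (auto simp: divide_strict_right_mono)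
  moreover have "mesh N t \<le> l / N"
    unfolding mesh_def t_def using \<open>0 < real N\<close> assms
    by (intro Max.boundedI) (auto simp: field_simps)
  moreover have "l / N < \<delta>" using N \<open>0 < real N\<close> assms by (simp add: field_simps)
  ultimately show ?thesis by fastforce
qed

lemma sum_chain_ge:
  fixes d :: "'a \<Rightarrow> 'a \<Rightarrow> real"
  assumes triangle: "\<And>x y z. d x z \<le> d x y + d y z" and refl: "\<And>x. d x x = 0" and "a \<le> b"
  shows "d (f a) (f b) \<le> (\<Sum>i\<in>{a..<b}. d (f i) (f (Suc i)))"
  using assms(3)
proof (induction b)
  case (Suc b)
  show ?case
  proof (cases "a \<le> b")
    case True
    have "d (f a) (f (Suc b)) \<le> d (f a) (f b) + d (f b) (f (Suc b))" by (rule triangle)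
    also have "\<dots> \<le> (\<Sum>i\<in>{a..<Suc b}. d (f i) (f (Suc i)))" using Suc True by simp
    finally show ?thesis .
  next
    case False
    then have "a = Suc b" using Suc by simp
    then show ?thesis by (simp add: refl)
  qed
qed (simp add: refl)

lemma partition_least_point_ge:
  assumes p: "is_partition l k p" and q: "is_partition l K q" and "j \<le> k"
  defines "i \<equiv> LEAST i. p j \<le> q i"
  shows "i \<le> K" "p j \<le> q i" "q i - p j \<le> mesh K q"
proof -
  have "p j \<le> q K" using is_partition_bounds[OF p \<open>j \<le> k\<close>] q unfolding is_partition_def by simp
  then show "i \<le> K" "p j \<le> q i" unfolding i_def by (metis LeastI Least_le)+
  show "q i - p j \<le> mesh K q"
  proof (cases "i = 0")
    case True
    then show ?thesis
      using \<open>p j \<le> q i\<close> is_partition_bounds[OF p \<open>j \<le> k\<close>] q mesh_nonneg[of K q]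
      unfolding is_partition_def by simp
  next
    case False
    then have "\<not> p j \<le> q (i - 1)" unfolding i_def by (intro not_less_Least) simp
    moreover have "q (Suc (i - 1)) - q (i - 1) \<le> mesh K q"
      using \<open>i \<le> K\<close> False by (intro step_le_mesh) simp
    ultimately show ?thesis using False by simp
  qed
qed

text \<open>Each point of the coarse partition \<open>p\<close> is moved to the next point of the fine partition
  \<open>q\<close>; this costs at most \<open>2 \<eta>\<close> per interval of \<open>p\<close>, and then the triangle inequality
  compares with the sum over \<open>q\<close>.\<close>
lemma partition_sum_le_fine_partition_sum:
  fixes d :: "'a \<Rightarrow> 'a \<Rightarrow> real" and \<gamma> :: "real \<Rightarrow> 'a"
  assumes triangle: "\<And>x y z. d x z \<le> d x y + d y z" and refl: "\<And>x. d x x = 0"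
    and sym: "\<And>x y. d x y = d y x"
    and p: "is_partition l k p" and q: "is_partition l K q" "mesh K q < \<delta>"
    and cont: "\<And>s t. 0 \<le> s \<Longrightarrow> s \<le> t \<Longrightarrow> t \<le> l \<Longrightarrow> t - s < \<delta> \<Longrightarrow> d (\<gamma> s) (\<gamma> t) \<le> \<eta>"
  shows "partition_sum d \<gamma> k p \<le> partition_sum d \<gamma> K q + 2 * real k * \<eta>"
proof -
  define \<sigma> where "\<sigma> j = (LEAST i. p j \<le> q i)" for j
  define D where "D i = d (\<gamma> (q i)) (\<gamma> (q (Suc i)))" for i
  note \<sigma> = partition_least_point_ge[OF p q(1), folded \<sigma>_def]
  have nonneg: "0 \<le> d x y" for x y
    using triangle[of x x y] refl[of x] sym[of y x] by linarith
  have close: "d (\<gamma> (p j)) (\<gamma> (q (\<sigma> j))) \<le> \<eta>" if "j \<le> k" for j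
    using cont[of "p j" "q (\<sigma> j)"] \<sigma>[OF that] q is_partition_bounds[OF p that]
      is_partition_bounds[OF q(1), of "\<sigma> j"] by simp
  have \<sigma>_mono: "\<sigma> j \<le> \<sigma> j'" if "j \<le> j'" "j' \<le> k" for j j'
  proof -
    have "p j \<le> p j'" using is_partition_mono[OF p that] .
    also have "\<dots> \<le> q (\<sigma> j')" using \<sigma>[OF that(2)] by simp
    finally show ?thesis unfolding \<sigma>_def[of j] by (rule Least_le)
  qed
  have step: "d (\<gamma> (p j)) (\<gamma> (p (Suc j))) \<le> 2 * \<eta> + (\<Sum>i\<in>{\<sigma> j..<\<sigma> (Suc j)}. D i)"
    if "j < k" for j
  proof -
    have "d (\<gamma> (p j)) (\<gamma> (p (Suc j)))
        \<le> d (\<gamma> (p j)) (\<gamma> (q (\<sigma> j))) + d (\<gamma> (q (\<sigma> j))) (\<gamma> (q (\<sigma> (Suc j))))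
          + d (\<gamma> (q (\<sigma> (Suc j)))) (\<gamma> (p (Suc j)))"
      by (meson add_mono order_refl order_trans triangle)
    also have "\<dots> \<le> \<eta> + (\<Sum>i\<in>{\<sigma> j..<\<sigma> (Suc j)}. D i) + \<eta>"
      using close[of j] close[of "Suc j"] sym that \<sigma>_mono[of j "Suc j"] unfolding D_def
      by (intro add_mono sum_chain_ge[where f = "\<lambda>i. \<gamma> (q i)", OF triangle refl]) auto
    finally show ?thesis by simp
  qed
  have telescope: "(\<Sum>j<m. (\<Sum>i\<in>{\<sigma> j..<\<sigma> (Suc j)}. D i)) = (\<Sum>i\<in>{\<sigma> 0..<\<sigma> m}. D i)"
    if "m \<le> k" for m
    using that
  proof (induction m)
    case (Suc m)
    then show ?case using \<sigma>_mono[of 0 m] \<sigma>_mono[of m "Suc m"]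
      by (simp add: sum.atLeastLessThan_concat)
  qed simp
  have "partition_sum d \<gamma> k p \<le> (\<Sum>j<k. 2 * \<eta> + (\<Sum>i\<in>{\<sigma> j..<\<sigma> (Suc j)}. D i))"
    unfolding partition_sum_def by (intro sum_mono step) simp
  also have "\<dots> = 2 * real k * \<eta> + (\<Sum>i\<in>{\<sigma> 0..<\<sigma> k}. D i)"
    using telescope[of k] by (simp add: sum.distrib)
  also have "(\<Sum>i\<in>{\<sigma> 0..<\<sigma> k}. D i) \<le> (\<Sum>i<K. D i)"
    using \<sigma>(1)[of k] by (intro sum_mono2) (auto simp: D_def nonneg)
  finally show ?thesis unfolding partition_sum_def D_def by simp
qed

lemma partition_sum_le_if_fine_le:
  fixes d :: "'a \<Rightarrow> 'a \<Rightarrow> real" and \<gamma> :: "real \<Rightarrow> 'a"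
  assumes "0 < l"
    and triangle: "\<And>x y z. d x z \<le> d x y + d y z" and refl: "\<And>x. d x x = 0"
    and sym: "\<And>x y. d x y = d y x"
    and cont: "\<And>\<eta>. \<eta> > 0 \<Longrightarrow> \<exists>\<delta>>0. \<forall>s t. 0 \<le> s \<longrightarrow> s \<le> t \<longrightarrow> t \<le> l \<longrightarrow> t - s < \<delta> \<longrightarrow>
       d (\<gamma> s) (\<gamma> t) \<le> \<eta>"
    and fine_le: "\<And>\<eta>. \<eta> > 0 \<Longrightarrow> \<exists>\<delta>>0. \<forall>k t. is_partition l k t \<longrightarrow> mesh k t < \<delta> \<longrightarrow>
       partition_sum d \<gamma> k t \<le> B + \<eta>"
    and p: "is_partition l k p"
  shows "partition_sum d \<gamma> k p \<le> B"
proof (rule field_le_epsilon)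
  fix e :: real assume "0 < e"
  define \<eta> where "\<eta> = e / (2 * real k + 1)"
  have "\<eta> > 0" using \<open>0 < e\<close> by (simp add: \<eta>_def)
  obtain \<delta>1 where "\<delta>1 > 0" and \<delta>1: "\<forall>k t. is_partition l k t \<longrightarrow> mesh k t < \<delta>1 \<longrightarrow>
      partition_sum d \<gamma> k t \<le> B + \<eta>"
    using fine_le[OF \<open>\<eta> > 0\<close>] by blast
  obtain \<delta>2 where "\<delta>2 > 0" and \<delta>2: "\<forall>s t. 0 \<le> s \<longrightarrow> s \<le> t \<longrightarrow> t \<le> l \<longrightarrow> t - s < \<delta>2 \<longrightarrow>
      d (\<gamma> s) (\<gamma> t) \<le> \<eta>"
    using cont[OF \<open>\<eta> > 0\<close>] by blast
  obtain K q where q: "is_partition l K q" "mesh K q < min \<delta>1 \<delta>2"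
    using exists_partition_mesh_less[OF \<open>0 < l\<close>, of "min \<delta>1 \<delta>2"] \<open>\<delta>1 > 0\<close> \<open>\<delta>2 > 0\<close> by auto
  have "partition_sum d \<gamma> k p \<le> partition_sum d \<gamma> K q + 2 * real k * \<eta>"
    using partition_sum_le_fine_partition_sum[where d = d and \<gamma> = \<gamma>, OF triangle refl sym p q] \<delta>2
    by auto
  also have "\<dots> \<le> B + (2 * real k + 1) * \<eta>" using \<delta>1 q by (auto simp: algebra_simps)
  also have "\<dots> = B + e" unfolding \<eta>_def by simp
  finally show "partition_sum d \<gamma> k p \<le> B + e" .
qed

text \<open>The limit is the supremum of all partition sums.\<close>
lemma partition_sum_converges:
  fixes d :: "'a \<Rightarrow> 'a \<Rightarrow> real" and \<gamma> :: "real \<Rightarrow> 'a"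
  assumes "0 < l"
    and triangle: "\<And>x y z. d x z \<le> d x y + d y z" and refl: "\<And>x. d x x = 0"
    and sym: "\<And>x y. d x y = d y x"
    and cont: "\<And>\<eta>. \<eta> > 0 \<Longrightarrow> \<exists>\<delta>>0. \<forall>s t. 0 \<le> s \<longrightarrow> s \<le> t \<longrightarrow> t \<le> l \<longrightarrow> t - s < \<delta> \<longrightarrow>
       d (\<gamma> s) (\<gamma> t) \<le> \<eta>"
    and fine_le: "\<And>\<eta>. \<eta> > 0 \<Longrightarrow> \<exists>\<delta>>0. \<forall>k t. is_partition l k t \<longrightarrow> mesh k t < \<delta> \<longrightarrow>
       partition_sum d \<gamma> k t \<le> B + \<eta>"
  shows "\<exists>L\<le>B. \<forall>\<epsilon>>0. \<exists>\<delta>>0. \<forall>k t. is_partition l k t \<and> mesh k t < \<delta> \<longrightarrow>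
    \<bar>partition_sum d \<gamma> k t - L\<bar> < \<epsilon>"
proof -
  note le_B = partition_sum_le_if_fine_le[OF assms]
  define S where "S = {partition_sum d \<gamma> k p | k p. is_partition l k p}"
  have "S \<noteq> {}" using exists_partition_mesh_less[OF \<open>0 < l\<close>, of 1] unfolding S_def by auto
  have "bdd_above S" unfolding S_def bdd_above_def using le_B by blast
  have "Sup S \<le> B" using \<open>S \<noteq> {}\<close> le_B by (intro cSup_least) (auto simp: S_def)
  have le_Sup: "partition_sum d \<gamma> k p \<le> Sup S" if "is_partition l k p" for k p
    using that \<open>bdd_above S\<close> by (intro cSup_upper) (auto simp: S_def)
  have "\<exists>\<delta>>0. \<forall>k t. is_partition l k t \<and> mesh k t < \<delta> \<longrightarrow> \<bar>partition_sum d \<gamma> k t - Sup S\<bar> < \<epsilon>"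
    if "\<epsilon> > 0" for \<epsilon>
  proof -
    obtain k0 p0 where p0: "is_partition l k0 p0" "Sup S - \<epsilon>/2 < partition_sum d \<gamma> k0 p0"
      using less_cSup_iff[OF \<open>S \<noteq> {}\<close> \<open>bdd_above S\<close>, of "Sup S - \<epsilon>/2"] \<open>\<epsilon> > 0\<close>
      unfolding S_def by auto
    define \<eta> where "\<eta> = \<epsilon> / (4 * (real k0 + 1))"
    have "\<eta> > 0" "2 * real k0 * \<eta> < \<epsilon> / 2" using \<open>\<epsilon> > 0\<close> by (simp_all add: \<eta>_def field_simps)
    obtain \<delta> where "\<delta> > 0" and \<delta>: "\<forall>s t. 0 \<le> s \<longrightarrow> s \<le> t \<longrightarrow> t \<le> l \<longrightarrow> t - s < \<delta> \<longrightarrow>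
        d (\<gamma> s) (\<gamma> t) \<le> \<eta>"
      using cont[OF \<open>\<eta> > 0\<close>] by blast
    have "\<bar>partition_sum d \<gamma> k t - Sup S\<bar> < \<epsilon>" if "is_partition l k t" "mesh k t < \<delta>" for k t
    proof -
      have "partition_sum d \<gamma> k0 p0 \<le> partition_sum d \<gamma> k t + 2 * real k0 * \<eta>"
        using partition_sum_le_fine_partition_sum[where d = d and \<gamma> = \<gamma>, OF triangle refl sym p0(1) that]
          \<delta> by auto
      then show ?thesis
        using le_Sup[OF that(1)] p0(2) \<open>2 * real k0 * \<eta> < \<epsilon> / 2\<close> by linarith
    qed
    then show ?thesis using \<open>\<delta> > 0\<close> by blast
  qed
  then show ?thesis using \<open>Sup S \<le> B\<close> by blast
qed

lemma rectifiable_on_linepath: "rectifiable_on 1 (linepath x y)"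
  unfolding rectifiable_on_def
proof (intro conjI exI allI impI)
  fix k t assume t: "is_partition 1 k t"
  have "partition_sum dist (linepath x y) k t = (\<Sum>i<k. norm (x - y) * (t (Suc i) - t i))"
    unfolding partition_sum_def dist_norm norm_linepath_diff
    using t by (intro sum.cong) (auto simp: is_partition_def)
  also have "\<dots> = norm (x - y) * (t k - t 0)"
    by (simp add: sum_distrib_left[symmetric] sum_lessThan_telescope)
  finally show "partition_sum dist (linepath x y) k t \<le> norm (x - y)"
    using t by (simp add: is_partition_def)
qed (auto intro: continuous_on_linepath)

lemma has_M_length_linepath_refl: "has_M_length M l (linepath x x) 0"
  by (auto simp: has_M_length_def partition_sum_def rhoM_def linepath_refl intro: exI[of _ 1])

lemma quasiconvex_if_linepath_M_length_le:
  assumes "\<And>x y :: 'a. \<exists>L. has_M_length M 1 (linepath x y) L \<and> L \<le> c * rhoM M x y"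
  shows "quasiconvex M c TYPE('a::real_normed_vector)"
  unfolding quasiconvex_def
proof (intro allI)
  fix x y :: 'a
  define S where "S = {L. \<exists>l \<gamma>. rectifiable_on l \<gamma> \<and> \<gamma> 0 = x \<and> \<gamma> l = y \<and> has_M_length M l \<gamma> L}"
  obtain L where "has_M_length M 1 (linepath x y) L" "L \<le> c * rhoM M x y" using assms by blast
  moreover have "linepath x y 0 = x" "linepath x y 1 = y" by (simp_all add: linepath_def)
  ultimately have "L \<in> S" unfolding S_def using rectifiable_on_linepath by blast
  then have "Inf (ereal ` S) \<le> ereal L" by (intro Inf_lower imageI)
  also have "\<dots> \<le> ereal (c * rhoM M x y)" using \<open>L \<le> c * rhoM M x y\<close> by simp
  finally show "Inf (ereal ` S) \<le> ereal (c * rhoM M x y)" .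
qed

section \<open>The metric \<open>rhoM M\<close>\<close>

lemma unit_vector_at_distance:
  fixes e v :: "'a::real_inner"
  assumes e: "norm e = 1" and v: "norm v = 1" and "inner e v = 0" and "0 \<le> \<delta>" "\<delta> \<le> 2"
  obtains e' where "norm e' = 1" "norm (e - e') = \<delta>" "\<And>\<kappa>. 1 \<le> \<kappa> \<Longrightarrow> \<delta> \<le> norm (e - \<kappa> *\<^sub>R e')"
proof -
  define c where "c = 1 - \<delta>\<^sup>2 / 2"
  define s where "s = sqrt (1 - c\<^sup>2)"
  define e' where "e' = c *\<^sub>R e + s *\<^sub>R v"
  have "\<delta>\<^sup>2 \<le> 2\<^sup>2" using assms by (intro power_mono) auto
  then have "\<bar>c\<bar> \<le> 1" by (simp add: c_def abs_le_iff)
  then have "c\<^sup>2 \<le> 1" by (simp add: abs_square_le_1)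
  then have "c\<^sup>2 + s\<^sup>2 = 1" by (simp add: s_def)
  have "inner e e = 1" "inner v v = 1"
    using e v by (simp_all add: power2_norm_eq_inner[symmetric])
  then have "inner e e' = c" "inner e' e' = c\<^sup>2 + s\<^sup>2"
    using \<open>inner e v = 0\<close>
    by (simp_all add: e'_def inner_add_left inner_add_right inner_commute[of v e] power2_eq_square)
  then have norm_sq: "(norm (e - \<kappa> *\<^sub>R e'))\<^sup>2 = 1 - 2 * \<kappa> * c + \<kappa>\<^sup>2" for \<kappa>
    unfolding power2_norm_eq_inner using \<open>inner e e = 1\<close> \<open>c\<^sup>2 + s\<^sup>2 = 1\<close>
    by (simp add: inner_diff_left inner_diff_right inner_commute[of e' e] power2_eq_square
        right_diff_distrib)
  show ?thesis
  proof
    show "norm e' = 1"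
      using \<open>inner e' e' = c\<^sup>2 + s\<^sup>2\<close> \<open>c\<^sup>2 + s\<^sup>2 = 1\<close> by (simp add: norm_eq_sqrt_inner)
    have "\<delta>\<^sup>2 = 2 - 2 * c" by (simp add: c_def)
    have "(norm (e - e'))\<^sup>2 = \<delta>\<^sup>2" using norm_sq[of 1] \<open>\<delta>\<^sup>2 = 2 - 2 * c\<close> by simp
    then show "norm (e - e') = \<delta>" using \<open>0 \<le> \<delta>\<close> by (simp add: power2_eq_iff_nonneg)
    fix \<kappa> :: real assume "1 \<le> \<kappa>"
    have "1 * \<delta>\<^sup>2 \<le> \<kappa> * \<delta>\<^sup>2" using \<open>1 \<le> \<kappa>\<close> by (intro mult_right_mono) auto
    then have "\<delta>\<^sup>2 \<le> (\<kappa> - 1)\<^sup>2 + \<kappa> * \<delta>\<^sup>2" using zero_le_power2[of "\<kappa> - 1"] by linarith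
    also have "\<dots> = 1 - 2 * \<kappa> * c + \<kappa>\<^sup>2"
      unfolding \<open>\<delta>\<^sup>2 = 2 - 2 * c\<close> by (simp add: power2_diff algebra_simps)
    also have "\<dots> = (norm (e - \<kappa> *\<^sub>R e'))\<^sup>2" by (rule norm_sq[symmetric])
    finally show "\<delta> \<le> norm (e - \<kappa> *\<^sub>R e')" by (rule power2_le_imp_le) simp
  qed
qed

locale rhoM_metric =
  fixes M :: "real \<Rightarrow> real \<Rightarrow> real" and \<alpha> :: real and e v :: "'a::real_inner"
  assumes alpha_pos: "0 < \<alpha>" and alpha_le_1: "\<alpha> \<le> 1"
    and M_nonneg: "\<And>x y. 0 \<le> x \<Longrightarrow> 0 \<le> y \<Longrightarrow> 0 \<le> M x y"
    and M_sym: "\<And>x y. 0 \<le> x \<Longrightarrow> 0 \<le> y \<Longrightarrow> M x y = M y x"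
    and M_hom: "\<And>t x y. 0 < t \<Longrightarrow> 0 \<le> x \<Longrightarrow> 0 \<le> y \<Longrightarrow> M (t * x) (t * y) = t powr \<alpha> * M x y"
    and M_1_1: "M 1 1 = 1"
    and metric: "Metric_space (UNIV :: 'a set) (rhoM M)"
    and orthonormal: "norm e = 1" "norm v = 1" "inner e v = 0"
begin

abbreviation rho :: "'a \<Rightarrow> 'a \<Rightarrow> real" where "rho \<equiv> rhoM M"

lemma rho_triangle: "rho x z \<le> rho x y + rho y z"
  using Metric_space.triangle[OF metric] by simp

lemma rho_sym: "rho x y = rho y x"
  using Metric_space.commute[OF metric] by simp

lemma rho_eq_0_iff: "rho x y = 0 \<longleftrightarrow> x = y"
  using Metric_space.zero[OF metric] by simp

lemma rho_refl: "rho x x = 0"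
  by (simp add: rhoM_def)

lemma M_diag:
  assumes "0 \<le> A"
  shows "M A A = A powr \<alpha>"
proof (cases "A = 0")
  case True
  have "M (2 * 0) (2 * 0) = 2 powr \<alpha> * M 0 0" by (rule M_hom) auto
  then have "(2 powr \<alpha> - 1) * M 0 0 = 0" by (simp add: algebra_simps)
  moreover have "2 powr \<alpha> \<noteq> 1" using alpha_pos by simp
  ultimately show ?thesis using True by simp
next
  case False
  then have "M (A * 1) (A * 1) = A powr \<alpha> * M 1 1" using assms by (intro M_hom) auto
  then show ?thesis using M_1_1 by simp
qed

lemma M_pos:
  assumes "0 \<le> A" "0 \<le> B" "0 < A + B"
  shows "0 < M A B"
proof -
  have "A *\<^sub>R e - - (B *\<^sub>R e) = (A + B) *\<^sub>R e" by (simp add: algebra_simps)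
  then have "norm (A *\<^sub>R e - - (B *\<^sub>R e)) \<noteq> 0" using assms orthonormal by simp
  then have "rho (A *\<^sub>R e) (- (B *\<^sub>R e)) \<noteq> 0" using rho_eq_0_iff by auto
  then have "M A B \<noteq> 0" using assms orthonormal by (simp add: rhoM_def)
  then show ?thesis using M_nonneg[OF assms(1,2)] by simp
qed

lemma M_0_left: "0 \<le> B \<Longrightarrow> M 0 B = B powr \<alpha> * M 0 1"
  using M_hom[of B 0 1] M_diag[of 0] by (cases "B = 0") auto

lemma rho_0_right: "rho z 0 = norm z powr (1 - \<alpha>) / M 0 1"
proof (cases "z = 0")
  case False
  have "rho z 0 = norm z / (norm z powr \<alpha> * M 0 1)"
    using M_sym[of "norm z" 0] M_0_left[of "norm z"] by (simp add: rhoM_def)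
  also have "\<dots> = norm z powr (1 - \<alpha>) / M 0 1"
    using False by (simp add: powr_diff)
  finally show ?thesis .
qed (simp add: rhoM_def)

lemma M_ge_max_powr:
  assumes "0 \<le> A" "0 \<le> B"
  shows "M 0 1 * max A B powr \<alpha> / 2 \<le> M A B"
proof (cases "A + B = 0")
  case True
  then have "A = 0" "B = 0" using assms by simp_all
  then show ?thesis using M_diag[of 0] by simp
next
  case False
  define m where "m = max A B"
  have "0 < M 0 1" "0 < M A B" using M_pos[of 0 1] M_pos[of A B] assms False by simp_all
  have "0 < m" "m \<le> A + B" "A \<le> m" "B \<le> m" using assms False by (auto simp: m_def)
  have "A *\<^sub>R e - - (B *\<^sub>R e) = (A + B) *\<^sub>R e" by (simp add: algebra_simps)
  then have "m / M A B \<le> rho (A *\<^sub>R e) (- (B *\<^sub>R e))"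
    using assms orthonormal \<open>m \<le> A + B\<close> \<open>0 < M A B\<close> by (simp add: rhoM_def divide_right_mono)
  also have "\<dots> \<le> rho (A *\<^sub>R e) 0 + rho (- (B *\<^sub>R e)) 0"
    using rho_triangle[of "A *\<^sub>R e" "- (B *\<^sub>R e)" 0] rho_sym[of 0 "- (B *\<^sub>R e)"] by simp
  also have "\<dots> = (A powr (1 - \<alpha>) + B powr (1 - \<alpha>)) / M 0 1"
    using assms orthonormal by (simp add: rho_0_right add_divide_distrib)
  also have "\<dots> \<le> 2 * m powr (1 - \<alpha>) / M 0 1"
  proof -
    have "A powr (1 - \<alpha>) \<le> m powr (1 - \<alpha>)" "B powr (1 - \<alpha>) \<le> m powr (1 - \<alpha>)"
      using assms alpha_le_1 \<open>A \<le> m\<close> \<open>B \<le> m\<close> by (simp_all add: powr_mono2)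
    then show ?thesis using \<open>0 < M 0 1\<close> by (intro divide_right_mono) auto
  qed
  finally have "m * M 0 1 \<le> 2 * m powr (1 - \<alpha>) * M A B"
    using \<open>0 < M 0 1\<close> \<open>0 < M A B\<close> by (simp add: field_simps)
  moreover have "m powr (1 - \<alpha>) * (M 0 1 * m powr \<alpha>) = m * M 0 1"
    using \<open>0 < m\<close> by (simp add: powr_add[symmetric] mult.left_commute)
  ultimately have "m powr (1 - \<alpha>) * (M 0 1 * m powr \<alpha>) \<le> m powr (1 - \<alpha>) * (2 * M A B)"
    by (simp only: mult_ac)
  then show ?thesis using \<open>0 < m\<close> by (simp add: m_def)
qed

lemma M_le_max_powr:
  assumes "0 \<le> A" "0 \<le> B"
  shows "M A B \<le> max A B powr \<alpha>"
proof -
  have le: "M A B \<le> B powr \<alpha>" if "0 \<le> A" "A \<le> B" for A B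
  proof (cases "B = 0")
    case True
    then show ?thesis using that M_diag[of 0] by simp
  next
    case False
    then have "0 < B" "0 < M A B" using that M_pos[of A B] by simp_all
    have "rho (B *\<^sub>R e) (- (B *\<^sub>R e)) \<le> rho (B *\<^sub>R e) (A *\<^sub>R e) + rho (A *\<^sub>R e) (- (B *\<^sub>R e))"
      by (rule rho_triangle)
    moreover have "B *\<^sub>R e - - (B *\<^sub>R e) = (2 * B) *\<^sub>R e"
      by (simp add: scaleR_left_distrib[symmetric])
    moreover have "B *\<^sub>R e - A *\<^sub>R e = (B - A) *\<^sub>R e" "A *\<^sub>R e - - (B *\<^sub>R e) = (A + B) *\<^sub>R e"
      by (simp_all add: algebra_simps)
    ultimately have "2 * B / B powr \<alpha> \<le> (B - A) / M A B + (A + B) / M A B"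
      using that orthonormal M_diag[of B] M_sym[of A B] by (simp add: rhoM_def)
    also have "\<dots> = 2 * B / M A B" by (simp add: add_divide_distrib[symmetric])
    finally show ?thesis using \<open>0 < B\<close> \<open>0 < M A B\<close> by (simp add: divide_le_eq field_simps)
  qed
  show ?thesis
    using le[of A B] le[of B A] assms M_sym[of A B] by (cases "A \<le> B") (simp_all add: max_def)
qed

text \<open>The triangle inequality through \<open>\<kappa> e\<close> from \<open>e\<close> to \<open>\<kappa> e'\<close>, where \<open>e'\<close> is a unit vector at
  distance \<open>\<delta>\<close> from \<open>e\<close>; this is where the second dimension is needed.\<close>
lemma M_1_ge_triangle:
  assumes "1 < \<kappa>" "0 < \<delta>" "\<delta> \<le> 2"
  shows "\<delta> - (\<kappa> - 1) \<le> \<delta> * \<kappa> powr (1 - \<alpha>) * M 1 \<kappa>"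
proof -
  obtain e' where e': "norm e' = 1" "norm (e - e') = \<delta>" "\<delta> \<le> norm (e - \<kappa> *\<^sub>R e')"
    using unit_vector_at_distance[OF orthonormal, of \<delta>] assms by (metis less_eq_real_def)
  have "0 < M 1 \<kappa>" using M_pos[of 1 \<kappa>] assms(1) by simp
  have "rho e (\<kappa> *\<^sub>R e') \<le> rho e (\<kappa> *\<^sub>R e) + rho (\<kappa> *\<^sub>R e) (\<kappa> *\<^sub>R e')"
    by (rule rho_triangle)
  moreover have "e - \<kappa> *\<^sub>R e = (1 - \<kappa>) *\<^sub>R e" "\<kappa> *\<^sub>R e - \<kappa> *\<^sub>R e' = \<kappa> *\<^sub>R (e - e')"
    by (simp_all add: algebra_simps)
  ultimately have "norm (e - \<kappa> *\<^sub>R e') / M 1 \<kappa> \<le> (\<kappa> - 1) / M 1 \<kappa> + \<kappa> * \<delta> / \<kappa> powr \<alpha>"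
    using orthonormal e' assms(1) M_diag[of \<kappa>] by (simp add: rhoM_def)
  moreover have "\<delta> / M 1 \<kappa> \<le> norm (e - \<kappa> *\<^sub>R e') / M 1 \<kappa>"
    using e'(3) \<open>0 < M 1 \<kappa>\<close> by (simp add: divide_right_mono)
  ultimately have "(\<delta> - (\<kappa> - 1)) / M 1 \<kappa> \<le> \<kappa> * \<delta> / \<kappa> powr \<alpha>"
    unfolding diff_divide_distrib by linarith
  also have "\<kappa> * \<delta> / \<kappa> powr \<alpha> = \<delta> * \<kappa> powr (1 - \<alpha>)"
    using assms(1) by (simp add: powr_diff)
  finally show ?thesis
    using \<open>0 < M 1 \<kappa>\<close> by (simp add: pos_divide_le_eq)
qed

lemma M_1_ge:
  assumes "0 < \<theta>" "1 \<le> \<kappa>" "\<kappa> \<le> 1 + \<theta> / (2 * (1 + \<theta>))"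
  shows "\<kappa> powr \<alpha> / (1 + \<theta>) \<le> M 1 \<kappa>"
proof (cases "\<kappa> = 1")
  case True
  then show ?thesis using M_1_1 assms by simp
next
  case False
  then have "1 < \<kappa>" using assms by simp
  define T where "T = 2 * (1 + \<theta>) / \<theta>"
  have "1 < T" using assms by (simp add: T_def field_simps)
  have "T * (\<kappa> - 1) \<le> T * (\<theta> / (2 * (1 + \<theta>)))"
    using \<open>1 < T\<close> assms by (intro mult_left_mono) auto
  also have "\<dots> = 1" using assms by (simp add: T_def)
  finally have "T * (\<kappa> - 1) - (\<kappa> - 1) \<le> T * (\<kappa> - 1) * \<kappa> powr (1 - \<alpha>) * M 1 \<kappa>"
    using M_1_ge_triangle[of \<kappa> "T * (\<kappa> - 1)"] \<open>1 < T\<close> \<open>1 < \<kappa>\<close> by simp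
  then have "(T - 1) * (\<kappa> - 1) \<le> (M 1 \<kappa> * \<kappa> powr (1 - \<alpha>) * T) * (\<kappa> - 1)"
    by (simp add: algebra_simps)
  then have "T - 1 \<le> M 1 \<kappa> * \<kappa> powr (1 - \<alpha>) * T"
    using \<open>1 < \<kappa>\<close> by simp
  moreover have "\<kappa> * T \<le> (1 + \<theta>) * (T - 1)"
  proof -
    have "\<theta> / (2 * (1 + \<theta>)) \<le> \<theta> / 2" using assms by (intro divide_left_mono) auto
    then have "\<kappa> \<le> 1 + \<theta> / 2" using assms(3) by linarith
    then have "\<kappa> * T \<le> (1 + \<theta> / 2) * T" using \<open>1 < T\<close> by (intro mult_right_mono) auto
    also have "\<dots> = (1 + \<theta>) * (T - 1)" using assms by (simp add: T_def field_simps)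
    finally show ?thesis .
  qed
  ultimately have "\<kappa> * T \<le> (1 + \<theta>) * (M 1 \<kappa> * \<kappa> powr (1 - \<alpha>) * T)"
    using assms by (meson order_trans mult_left_mono less_eq_real_def add_pos_pos zero_less_one)
  then have "\<kappa> powr \<alpha> * \<kappa> powr (1 - \<alpha>) \<le> ((1 + \<theta>) * M 1 \<kappa>) * \<kappa> powr (1 - \<alpha>)"
    using \<open>1 < T\<close> \<open>1 < \<kappa>\<close> by (simp flip: powr_add)
  then have "\<kappa> powr \<alpha> \<le> (1 + \<theta>) * M 1 \<kappa>" using \<open>1 < \<kappa>\<close> by simp
  then show ?thesis using assms by (simp add: divide_le_eq algebra_simps)
qed

lemma M_ge_near_diagonal:
  assumes "0 < \<theta>" "0 < A" "0 < B" "\<bar>A - B\<bar> \<le> \<theta> / (2 * (1 + \<theta>)) * min A B"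
  shows "max A B powr \<alpha> / (1 + \<theta>) \<le> M A B"
proof -
  have le: "B powr \<alpha> / (1 + \<theta>) \<le> M A B"
    if "0 < A" "A \<le> B" "B - A \<le> \<theta> / (2 * (1 + \<theta>)) * A" for A B
  proof -
    define \<kappa> where "\<kappa> = B / A"
    have "1 \<le> \<kappa>" "\<kappa> \<le> 1 + \<theta> / (2 * (1 + \<theta>))"
      using that by (simp_all add: \<kappa>_def field_simps)
    have "B powr \<alpha> / (1 + \<theta>) = A powr \<alpha> * (\<kappa> powr \<alpha> / (1 + \<theta>))"
      using that by (simp add: \<kappa>_def powr_divide)
    also have "\<dots> \<le> A powr \<alpha> * M 1 \<kappa>"
      using M_1_ge[OF assms(1) \<open>1 \<le> \<kappa>\<close> \<open>\<kappa> \<le> _\<close>] by (intro mult_left_mono) auto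
    also have "\<dots> = M (A * 1) (A * \<kappa>)"
      using that \<open>1 \<le> \<kappa>\<close> by (intro M_hom[symmetric]) auto
    finally show ?thesis using that by (simp add: \<kappa>_def)
  qed
  show ?thesis
    using le[of A B] le[of B A] assms M_sym[of A B] by (cases "A \<le> B") (auto simp: max_def min_def)
qed

lemma rho_le_of_M_ge:
  assumes "0 < L" "L \<le> M (norm z) (norm w)"
  shows "rho z w \<le> norm (z - w) / L"
  unfolding rhoM_def using assms by (intro divide_left_mono) auto

lemma rho_le_near_diagonal:
  assumes "0 < \<theta>" "z \<noteq> w" "norm (z - w) \<le> \<theta> / (2 * (1 + \<theta>)) * min (norm z) (norm w)"
  shows "rho z w \<le> (1 + \<theta>) * norm (z - w) * max (norm z) (norm w) powr (- \<alpha>)"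
proof -
  define m where "m = max (norm z) (norm w)"
  have "0 < norm (z - w)" using assms(2) by simp
  then have "0 < \<theta> / (2 * (1 + \<theta>)) * min (norm z) (norm w)" using assms(3) by linarith
  then have "0 < norm z" "0 < norm w" using assms(1) by (auto simp: zero_less_mult_iff)
  then have "0 < m" by (simp add: m_def less_max_iff_disj)
  have "m powr \<alpha> / (1 + \<theta>) \<le> M (norm z) (norm w)"
    unfolding m_def using assms \<open>0 < norm z\<close> \<open>0 < norm w\<close> norm_triangle_ineq3[of z w]
    by (intro M_ge_near_diagonal) auto
  then have "rho z w \<le> norm (z - w) / (m powr \<alpha> / (1 + \<theta>))"
    using \<open>0 < m\<close> assms(1) by (intro rho_le_of_M_ge) auto
  also have "\<dots> = (1 + \<theta>) * norm (z - w) * m powr (- \<alpha>)"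
    using \<open>0 < m\<close> by (simp add: powr_minus divide_simps)
  finally show ?thesis by (simp add: m_def)
qed

lemma rho_le: "rho z w \<le> 2 / M 0 1 * norm (z - w) * max (norm z) (norm w) powr (- \<alpha>)"
proof (cases "z = w")
  case False
  define m where "m = max (norm z) (norm w)"
  have "0 < m" using False by (cases "z = 0") (auto simp: m_def less_max_iff_disj)
  have "0 < M 0 1" using M_pos[of 0 1] by simp
  have "rho z w \<le> norm (z - w) / (M 0 1 * m powr \<alpha> / 2)"
    using M_ge_max_powr \<open>0 < m\<close> \<open>0 < M 0 1\<close> by (intro rho_le_of_M_ge) (auto simp: m_def)
  also have "\<dots> = 2 / M 0 1 * norm (z - w) * m powr (- \<alpha>)"
    using \<open>0 < m\<close> \<open>0 < M 0 1\<close> by (simp add: powr_minus divide_simps)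
  finally show ?thesis by (simp add: m_def)
qed (simp add: rho_refl)

lemma rho_linepath_le:
  assumes "\<alpha> < 1" "x \<noteq> y" "0 \<le> s" "s \<le> t" "t \<le> 1"
    and "max (norm (linepath x y s)) (norm (linepath x y t)) \<le> R"
  shows "rho (linepath x y s) (linepath x y t) \<le>
    2 / M 0 1 * (radial_primitive \<alpha> R x y s - radial_primitive \<alpha> R x y t)"
proof (cases "s = t")
  case False
  have "0 < M 0 1" using M_pos[of 0 1] by simp
  have "rho (linepath x y s) (linepath x y t) \<le> 2 / M 0 1 *
      (norm (linepath x y s - linepath x y t) *
       max (norm (linepath x y s)) (norm (linepath x y t)) powr (- \<alpha>))"
    using rho_le by (simp add: mult.assoc)
  also have "\<dots> \<le> 2 / M 0 1 * (radial_primitive \<alpha> R x y s - radial_primitive \<alpha> R x y t)"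
    using assms False alpha_pos \<open>0 < M 0 1\<close>
    by (intro mult_left_mono linepath_step_le_radial_primitive) auto
  finally show ?thesis .
qed (simp add: rho_refl)

lemma rho_linepath_le_near_diagonal:
  assumes "\<alpha> < 1" "x \<noteq> y" "0 < \<theta>" "0 \<le> s" "s < t" "t \<le> 1"
    and near: "norm (linepath x y s - linepath x y t)
      \<le> \<theta> / (2 * (1 + \<theta>)) * min (norm (linepath x y s)) (norm (linepath x y t))"
  defines "P \<equiv> radial_primitive \<alpha> (norm x + norm y) x y"
  shows "rho (linepath x y s) (linepath x y t) \<le> (1 + \<theta>) * (P s - P t)"
proof -
  have "norm (linepath x y s - linepath x y t) \<noteq> 0"
    using assms(2,5) by (simp add: norm_linepath_diff)
  then have "linepath x y s \<noteq> linepath x y t" by auto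
  then have "rho (linepath x y s) (linepath x y t) \<le> (1 + \<theta>) *
      (norm (linepath x y s - linepath x y t) *
       max (norm (linepath x y s)) (norm (linepath x y t)) powr (- \<alpha>))"
    using rho_le_near_diagonal[OF assms(3) _ near] by (simp add: mult.assoc)
  also have "\<dots> \<le> (1 + \<theta>) * (P s - P t)"
    unfolding P_def using assms alpha_pos norm_linepath_le[of s x y] norm_linepath_le[of t x y]
    by (intro mult_left_mono linepath_step_le_radial_primitive) auto
  finally show ?thesis .
qed

lemma rho_linepath_step_le:
  assumes "\<alpha> < 1" "x \<noteq> y" "0 < \<theta>" "0 \<le> s" "s < t" "t \<le> 1"
    and R: "norm (x - y) * (t - s) * (1 + 2 * (1 + \<theta>) / \<theta>) \<le> R"
  defines "P \<equiv> radial_primitive \<alpha> (norm x + norm y) x y"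
  shows "rho (linepath x y s) (linepath x y t) \<le>
    (1 + \<theta>) * (P s - P t) + 2 / M 0 1 * (radial_primitive \<alpha> R x y s - radial_primitive \<alpha> R x y t)"
proof -
  define z where "z = linepath x y s"
  define w where "w = linepath x y t"
  have "0 < M 0 1" using M_pos[of 0 1] by simp
  have "0 \<le> P s - P t" "0 \<le> radial_primitive \<alpha> R x y s - radial_primitive \<alpha> R x y t"
    using assms(1,5) by (simp_all add: P_def radial_primitive_antimono)
  show ?thesis
  proof (cases "norm (z - w) \<le> \<theta> / (2 * (1 + \<theta>)) * min (norm z) (norm w)")
    case True
    then have "rho z w \<le> (1 + \<theta>) * (P s - P t)"
      unfolding P_def z_def w_def by (rule rho_linepath_le_near_diagonal[OF assms(1-6)])
    then show ?thesis
      using \<open>0 < M 0 1\<close> \<open>0 \<le> radial_primitive \<alpha> R x y s - radial_primitive \<alpha> R x y t\<close>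
      by (simp add: z_def w_def add_increasing2)
  next
    case False
    have "max (norm z) (norm w) \<le> norm (z - w) * (1 + 1 / (\<theta> / (2 * (1 + \<theta>))))"
      using False assms(3) by (intro max_norm_le_if_not_near) auto
    also have "\<dots> \<le> R"
      using R assms(5) by (simp add: z_def w_def norm_linepath_diff mult_ac)
    finally have "rho z w \<le> 2 / M 0 1 * (radial_primitive \<alpha> R x y s - radial_primitive \<alpha> R x y t)"
      unfolding z_def w_def using assms by (intro rho_linepath_le) auto
    then show ?thesis
      using \<open>0 \<le> P s - P t\<close> assms(3) by (simp add: z_def w_def add_increasing)
  qed
qed

lemma rho_linepath_uniformly_small:
  assumes "\<alpha> < 1" "x \<noteq> y" "0 < \<eta>"
  shows "\<exists>\<delta>>0. \<forall>s t. 0 \<le> s \<longrightarrow> s \<le> t \<longrightarrow> t \<le> 1 \<longrightarrow> t - s < \<delta> \<longrightarrow>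
    rho (linepath x y s) (linepath x y t) \<le> \<eta>"
proof -
  define P where "P = radial_primitive \<alpha> (norm x + norm y) x y"
  define K where "K = 2 / M 0 1"
  have "0 < K" using M_pos[of 0 1] by (simp add: K_def)
  have "uniformly_continuous_on {0..1} P"
    unfolding P_def using assms(1)
    by (intro compact_uniformly_continuous continuous_on_radial_primitive) auto
  moreover have "0 < \<eta> / K" using \<open>0 < K\<close> assms(3) by simp
  ultimately obtain \<delta> where "0 < \<delta>"
    and \<delta>: "\<forall>s\<in>{0..1}. \<forall>t\<in>{0..1}. dist t s < \<delta> \<longrightarrow> dist (P t) (P s) < \<eta> / K"
    unfolding uniformly_continuous_on_def by blast
  have "rho (linepath x y s) (linepath x y t) \<le> \<eta>"
    if "0 \<le> s" "s \<le> t" "t \<le> 1" "t - s < \<delta>" for s t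
  proof -
    have "rho (linepath x y s) (linepath x y t) \<le> K * (P s - P t)"
      using rho_linepath_le[OF assms(1,2) that(1-3)] that
        norm_linepath_le[of s x y] norm_linepath_le[of t x y] by (simp add: K_def P_def)
    also have "\<dots> \<le> K * (\<eta> / K)"
      using \<delta>[rule_format, of s t] that \<open>0 < K\<close> by (intro mult_left_mono) (auto simp: dist_real_def)
    finally show ?thesis using \<open>0 < K\<close> by simp
  qed
  then show ?thesis using \<open>0 < \<delta>\<close> by blast
qed

text \<open>The steps near the diagonal cost at most \<open>1 + \<theta>\<close> times the primitive; the other steps
  stay inside the ball of radius \<open>R\<close>, where the primitive varies by \<open>O(R powr (1 - \<alpha>))\<close>.\<close>
lemma partition_sum_rho_linepath_le:
  assumes "\<alpha> < 1" "x \<noteq> y" "0 < \<theta>" "0 \<le> R" and t: "is_partition 1 k t"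
    and steps: "\<And>i. i < k \<Longrightarrow> norm (x - y) * (t (Suc i) - t i) * (1 + 2 * (1 + \<theta>) / \<theta>) \<le> R"
  defines "P \<equiv> radial_primitive \<alpha> (norm x + norm y) x y"
    and "C \<equiv> norm (x - y) / ((norm x + norm y) * (1 - \<alpha>))"
  shows "partition_sum rho (linepath x y) k t
    \<le> (1 + \<theta>) * (P 0 - P 1) + 2 / M 0 1 * (2 * (C * R powr (1 - \<alpha>)))"
proof -
  define Q where "Q = radial_primitive \<alpha> R x y"
  define K where "K = 2 / M 0 1"
  have "0 < K" using M_pos[of 0 1] by (simp add: K_def)
  have "rho (linepath x y (t i)) (linepath x y (t (Suc i)))
      \<le> (1 + \<theta>) * (P (t i) - P (t (Suc i))) + K * (Q (t i) - Q (t (Suc i)))"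
    if "i < k" for i
    unfolding P_def K_def Q_def
    using is_partition_bounds[OF t, of i] is_partition_bounds[OF t, of "Suc i"] t that
      steps[OF that]
    by (intro rho_linepath_step_le[OF assms(1-3)]) (auto simp: is_partition_def)
  then have "partition_sum rho (linepath x y) k t
      \<le> (\<Sum>i<k. (1 + \<theta>) * (P (t i) - P (t (Suc i))) + K * (Q (t i) - Q (t (Suc i))))"
    unfolding partition_sum_def by (intro sum_mono) simp
  also have "\<dots> = (1 + \<theta>) * (P 0 - P 1) + K * (Q 0 - Q 1)"
    using t sum_lessThan_telescope'[of "\<lambda>i. P (t i)" k] sum_lessThan_telescope'[of "\<lambda>i. Q (t i)" k]
    by (simp add: sum.distrib sum_distrib_left[symmetric] is_partition_def)
  also have "K * (Q 0 - Q 1) \<le> K * (2 * (C * R powr (1 - \<alpha>)))"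
  proof -
    have "\<bar>Q r\<bar> \<le> C * R powr (1 - \<alpha>)" for r
      unfolding Q_def C_def using assms(1,4) by (intro abs_radial_primitive_le)
    from this[of 0] this[of 1] show ?thesis using \<open>0 < K\<close> by (intro mult_left_mono) auto
  qed
  finally show ?thesis by (simp add: K_def)
qed

lemma linepath_partition_sum_le:
  assumes "\<alpha> < 1" "x \<noteq> y" "0 < \<eta>"
  defines "P \<equiv> radial_primitive \<alpha> (norm x + norm y) x y"
  shows "\<exists>\<delta>>0. \<forall>k t. is_partition 1 k t \<longrightarrow> mesh k t < \<delta> \<longrightarrow>
    partition_sum rho (linepath x y) k t \<le> P 0 - P 1 + \<eta>"
proof -
  define B where "B = P 0 - P 1"
  define K where "K = 2 / M 0 1"
  define C where "C = norm (x - y) / ((norm x + norm y) * (1 - \<alpha>))"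
  define \<theta> where "\<theta> = \<eta> / (2 * B + 1)"
  define R where "R = (\<eta> / (4 * K * C)) powr (1 / (1 - \<alpha>))"
  define D where "D = norm (x - y) * (1 + 2 * (1 + \<theta>) / \<theta>)"
  have "0 \<le> B"
    using radial_primitive_antimono[OF assms(1), of 0 1 "norm x + norm y" x y]
    by (simp add: B_def P_def)
  have "0 < K" using M_pos[of 0 1] by (simp add: K_def)
  have "0 < C" using assms(1,2) norm_add_norm_pos[OF assms(2)] by (simp add: C_def)
  have "0 < \<theta>" using \<open>0 \<le> B\<close> assms(3) by (simp add: \<theta>_def)
  have "0 < R" "K * (2 * (C * R powr (1 - \<alpha>))) = \<eta> / 2"
    using \<open>0 < K\<close> \<open>0 < C\<close> assms(1,3) by (simp_all add: R_def powr_powr)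
  have "\<theta> * B \<le> \<eta> / 2" using \<open>0 \<le> B\<close> assms(3) by (simp add: \<theta>_def field_simps)
  have "0 < 1 + 2 * (1 + \<theta>) / \<theta>" using \<open>0 < \<theta>\<close> by (intro add_pos_pos divide_pos_pos) auto
  then have "0 < D" using assms(2) by (simp add: D_def)
  have "partition_sum rho (linepath x y) k t \<le> B + \<eta>"
    if t: "is_partition 1 k t" "mesh k t < R / D" for k t
  proof -
    have "norm (x - y) * (t (Suc i) - t i) * (1 + 2 * (1 + \<theta>) / \<theta>) \<le> R" if "i < k" for i
    proof -
      have "t (Suc i) - t i < R / D" using step_le_mesh[OF that, of t] t(2) by simp
      then show ?thesis using \<open>0 < D\<close> by (simp add: D_def pos_less_divide_eq mult_ac)
    qed
    then have "partition_sum rho (linepath x y) k t \<le> (1 + \<theta>) * B + K * (2 * (C * R powr (1 - \<alpha>)))"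
      using partition_sum_rho_linepath_le[OF assms(1,2) \<open>0 < \<theta>\<close> _ t(1)] \<open>0 < R\<close>
      unfolding B_def P_def C_def K_def by simp
    then show ?thesis
      using \<open>K * (2 * (C * R powr (1 - \<alpha>))) = \<eta> / 2\<close> \<open>\<theta> * B \<le> \<eta> / 2\<close> by (simp add: algebra_simps)
  qed
  moreover have "0 < R / D" using \<open>0 < R\<close> \<open>0 < D\<close> by simp
  ultimately show ?thesis unfolding B_def by blast
qed

lemma linepath_has_M_length_le:
  fixes x y :: 'a
  assumes "\<alpha> < 1" "x \<noteq> y"
  shows "\<exists>L. has_M_length M 1 (linepath x y) L \<and>
    L \<le> norm (x - y) / ((1 - \<alpha>) * ((norm x + norm y) / 2) powr \<alpha>)"
proof -
  define P where "P = radial_primitive \<alpha> (norm x + norm y) x y"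
  obtain L where "L \<le> P 0 - P 1" and L: "\<forall>\<epsilon>>0. \<exists>\<delta>>0. \<forall>k t. is_partition 1 k t \<and> mesh k t < \<delta> \<longrightarrow>
      \<bar>partition_sum rho (linepath x y) k t - L\<bar> < \<epsilon>"
    using partition_sum_converges[where d = rho and \<gamma> = "linepath x y" and B = "P 0 - P 1",
        OF _ rho_triangle rho_refl rho_sym rho_linepath_uniformly_small[OF assms]
        linepath_partition_sum_le[OF assms, folded P_def]]
    by auto
  have "has_M_length M 1 (linepath x y) L" unfolding has_M_length_def by (rule L)
  moreover have "P 0 - P 1 \<le> norm (x - y) / ((1 - \<alpha>) * ((norm x + norm y) / 2) powr \<alpha>)"
    unfolding P_def using assms alpha_pos by (intro radial_primitive_0_1_le) auto
  ultimately show ?thesis using \<open>L \<le> P 0 - P 1\<close> by auto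
qed

lemma linepath_M_length_le_rho:
  fixes x y :: 'a
  assumes "\<alpha> < 1"
    and M_le: "\<And>A B. 0 \<le> A \<Longrightarrow> 0 \<le> B \<Longrightarrow> M A B \<le> c * (1 - \<alpha>) * ((A + B) / 2) powr \<alpha>"
  shows "\<exists>L. has_M_length M 1 (linepath x y) L \<and> L \<le> c * rho x y"
proof (cases "x = y")
  case True
  then show ?thesis using has_M_length_linepath_refl by (auto simp: rho_refl)
next
  case False
  define m where "m = (norm x + norm y) / 2"
  obtain L where L: "has_M_length M 1 (linepath x y) L" "L \<le> norm (x - y) / ((1 - \<alpha>) * m powr \<alpha>)"
    using linepath_has_M_length_le[OF assms(1) False] by (auto simp: m_def)
  have "0 < M (norm x) (norm y)" using norm_add_norm_pos[OF False] by (intro M_pos) auto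
  moreover have "M (norm x) (norm y) \<le> c * ((1 - \<alpha>) * m powr \<alpha>)"
    using M_le[of "norm x" "norm y"] by (simp add: m_def mult.assoc)
  moreover have "0 < (1 - \<alpha>) * m powr \<alpha>"
    using assms(1) norm_add_norm_pos[OF False] by (simp add: m_def)
  ultimately have "0 < c * ((1 - \<alpha>) * m powr \<alpha>)" "0 < (1 - \<alpha>) * m powr \<alpha>" by linarith+
  then have "0 < c" by (rule zero_less_mult_pos2)
  have "norm (x - y) / ((1 - \<alpha>) * m powr \<alpha>) = c * norm (x - y) / (c * ((1 - \<alpha>) * m powr \<alpha>))"
    using \<open>0 < c\<close> by simp
  also have "\<dots> \<le> c * norm (x - y) / M (norm x) (norm y)"
    using \<open>0 < M (norm x) (norm y)\<close> \<open>M (norm x) (norm y) \<le> _\<close> \<open>0 < c\<close>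
    by (intro divide_left_mono) auto
  also have "\<dots> = c * rho x y" by (simp add: rhoM_def)
  finally show ?thesis using L by auto
qed

lemma quasiconvex_if_M_le_midpoint_powr:
  assumes "\<alpha> < 1"
    and "\<And>A B. 0 \<le> A \<Longrightarrow> 0 \<le> B \<Longrightarrow> M A B \<le> c * (1 - \<alpha>) * ((A + B) / 2) powr \<alpha>"
  shows "quasiconvex M c TYPE('a)"
  using linepath_M_length_le_rho[OF assms] by (rule quasiconvex_if_linepath_M_length_le)


lemma quasiconvex_if_M_le_power_mean:
  assumes "\<alpha> < 1" "0 < p" "\<And>A B. 0 \<le> A \<Longrightarrow> 0 \<le> B \<Longrightarrow> M A B \<le> power_mean p A B powr \<alpha>"
  shows "quasiconvex M (c_const p \<alpha>) TYPE('a)"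
  using assms(1)
proof (rule quasiconvex_if_M_le_midpoint_powr)
  fix A B :: real assume "0 \<le> A" "0 \<le> B"
  then show "M A B \<le> c_const p \<alpha> * (1 - \<alpha>) * ((A + B) / 2) powr \<alpha>"
    using assms(3) power_mean_powr_le_c_const[OF assms(2) _ _ alpha_pos assms(1)]
    by (meson order_trans)
qed

lemma quasiconvex_two_powr:
  assumes "\<alpha> < 1"
  shows "quasiconvex M (2 powr \<alpha> / (1 - \<alpha>)) TYPE('a)"
proof -
  have "quasiconvex M (c_const \<infinity> \<alpha>) TYPE('a)"
    using assms M_le_max_powr
    by (intro quasiconvex_if_M_le_power_mean) (simp_all add: power_mean_def)
  moreover have "c_const \<infinity> \<alpha> = 2 powr \<alpha> / (1 - \<alpha>)"
    using alpha_pos by (simp add: c_const_def inv_p_def max_absorb1)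
  ultimately show ?thesis by simp
qed

end


lemma exists_orthonormal_pair:
  assumes "2 \<le> CARD('n::finite)"
  obtains e v :: "real ^ 'n" where "norm e = 1" "norm v = 1" "inner e v = 0"
proof -
  obtain i j :: 'n where "i \<noteq> j"
  proof -
    have "\<not> CARD('n) \<le> Suc 0" using assms by simp
    then show ?thesis using that by (auto simp: card_le_Suc0_iff_eq)
  qed
  then show ?thesis by (intro that[of "axis i 1" "axis j 1"]) (simp_all add: inner_axis_axis)
qed

theorem corollary4p3:
  fixes M :: "real \<Rightarrow> real \<Rightarrow> real" and \<alpha> :: real
  assumes n2: "CARD('n::finite) \<ge> 2"
    and alpha: "0 < \<alpha>" "\<alpha> \<le> 1"
    and M_nonneg: "\<And>x y. 0 \<le> x \<Longrightarrow> 0 \<le> y \<Longrightarrow> 0 \<le> M x y"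
    and M_sym: "\<And>x y. 0 \<le> x \<Longrightarrow> 0 \<le> y \<Longrightarrow> M x y = M y x"
    and M_hom: "\<And>t x y. 0 < t \<Longrightarrow> 0 \<le> x \<Longrightarrow> 0 \<le> y \<Longrightarrow> M (t * x) (t * y) = t powr \<alpha> * M x y"
    and M11: "M 1 1 = 1"
    and metric: "Metric_space (UNIV :: (real ^ 'n) set) (rhoM M)"
  shows "(\<alpha> < 1 \<longrightarrow> quasiconvex M (2 powr \<alpha> / (1 - \<alpha>)) TYPE(real ^ 'n))
       \<and> (\<forall>p::ereal. \<alpha> < 1 \<and> 0 < p \<and>
            (\<forall>x y. 0 \<le> x \<longrightarrow> 0 \<le> y \<longrightarrow> M x y \<le> power_mean p x y powr \<alpha>)
            \<longrightarrow> quasiconvex M (c_const p \<alpha>) TYPE(real ^ 'n))"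
proof -
  obtain e v :: "real ^ 'n" where "norm e = 1" "norm v = 1" "inner e v = 0"
    using n2 by (rule exists_orthonormal_pair)
  then interpret rhoM: rhoM_metric M \<alpha> e v
    using alpha M_nonneg M_sym M_hom M11 metric by (simp add: rhoM_metric_def)
  show ?thesis
    using rhoM.quasiconvex_two_powr rhoM.quasiconvex_if_M_le_power_mean by auto
qed

end
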